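(* Let $\{z_n\}_{n\ge 0}$ be a sequence of positive numbers satisfying the recurrence $$z_{n+1}=a_nz_{n}+b_nz_{n-1}\qquad (n\ge 1),$$ where $a_n>0$ and $b_n<0$. Assume that $a_{n+1}a_n+b_{n+1}>0$ for $n\geq 1$. For each $n$ let $$f_n(x)=\left[(a_{n+1}a_n+b_{n+1})x+a_{n+1}b_n\right](x-a_{n-1})x^6-b_{n-1}(a_nx+b_n)^4.$$ Suppose there exist two sequences $r(n)$ and $s(n)$ and a positive integer $N$ such that for all $n\geq N$: (i) $r(n)\leq\frac{z_{n}}{z_{n-1}}\leq s(n)\leq a_n$; (ii) $8(a_{n+1}a_n+b_{n+1})r(n)+5(a_{n+1}b_{n}-a_{n-1}a_{n+1}a_n-a_{n-1}b_{n+1})\geq0$ and $a_nr(n)+b_n\geq0$; (iii) $f_n''(r(n))>0$, $f_n'(r(n))>0$ and $f_n(s(n))<0$. Then the ratio sequence $\{z_{n+1}/z_n\}_{n\ge N}$ is ratio log-convex.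
   Context: A sequence $\{x_n\}$ of positive numbers is log-convex if $x_{n-1}x_{n+1}\ge x_n^2$ for all indices $n$ for which the three terms are defined. A sequence $\{x_n\}$ of positive numbers is called ratio log-convex if the sequence $\{x_{n+1}/x_n\}$ is log-convex. *)

theory Defs
  imports "HOL-Analysis.Analysis"
begin

definition log_convex :: "(nat \<Rightarrow> real) \<Rightarrow> bool" where
  "log_convex x \<longleftrightarrow> (\<forall>n. x n > 0) \<and> (\<forall>n\<ge>1. x (n - 1) * x (n + 1) \<ge> (x n)^2)"

definition ratio_log_convex :: "(nat \<Rightarrow> real) \<Rightarrow> bool" where
  "ratio_log_convex x \<longleftrightarrow> (\<forall>n. x n > 0) \<and> log_convex (\<lambda>n. x (n + 1) / x n)"

text \<open>The polynomial f_n from the statement (requires n >= 1 for the indices n-1).\<close>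
definition fpoly :: "(nat \<Rightarrow> real) \<Rightarrow> (nat \<Rightarrow> real) \<Rightarrow> nat \<Rightarrow> real \<Rightarrow> real" where
  "fpoly a b n x =
     ((a (n+1) * a n + b (n+1)) * x + a (n+1) * b n) * (x - a (n - 1)) * x^6
     - b (n - 1) * (a n * x + b n)^4"

end

theory Submission
  imports Defs
begin

text \<open>
  Write \<open>x n = z n / z (n - 1)\<close>. Using the recurrence at \<open>n - 1\<close>, \<open>n\<close> and \<open>n + 1\<close>,
  \<open>f\<^sub>n (x n) = b (n - 1) * (z (n+2) * z (n-2) * z n ^ 6 - z (n+1) ^ 4 * z (n-1) ^ 4) / z (n-1) ^ 8\<close>;
  as \<open>b (n - 1) < 0\<close>, \<open>f\<^sub>n (x n) < 0\<close> is exactly the ratio log-convexity inequality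
  \<open>(x (n+1) / x n)\<^sup>2 \<le> (x n / x (n-1)) * (x (n+2) / x (n+1))\<close>.
  Since \<open>r n \<le> x n \<le> s n\<close> and \<open>f\<^sub>n (s n) < 0\<close>, it suffices that \<open>f\<^sub>n\<close> is nondecreasing
  on \<open>[r n, \<infinity>)\<close>: condition (ii) makes every term of \<open>f\<^sub>n'''\<close> nonnegative there, and then
  \<open>f\<^sub>n'' (r n) > 0\<close> and \<open>f\<^sub>n' (r n) > 0\<close> propagate to the right.
\<close>

lemma pos_on_atLeast_if_deriv_nonneg:
  fixes f f' :: "real \<Rightarrow> real"
  assumes "\<And>t. r \<le> t \<Longrightarrow> (f has_real_derivative f' t) (at t)"
    and "\<And>t. r \<le> t \<Longrightarrow> f' t \<ge> 0"
    and "f r > 0" and "r \<le> t"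
  shows "f t > 0"
proof -
  have "f r \<le> f t"
    by (rule DERIV_nonneg_imp_nondecreasing[OF \<open>r \<le> t\<close>]) (use assms in auto)
  with \<open>f r > 0\<close> show ?thesis by linarith
qed

lemma sextic_mono_on:
  fixes A c a' b' a b r :: real
  defines "F \<equiv> \<lambda>x. (A * x + c) * (x - a') * x^6 - b' * (a * x + b)^4"
  assumes A: "A > 0" and c: "c < 0" and a': "a' > 0" and b': "b' < 0"
    and a: "a > 0" and b: "b < 0"
    and r1: "8 * A * r + 5 * (c - A * a') \<ge> 0" and r2: "a * r + b \<ge> 0"
    and F2r: "deriv (deriv F) r > 0" and F1r: "deriv F r > 0"
  shows "mono_on {r..} F"
proof -
  define F1 where "F1 t = 8*A*t^7 + 7*(c - A*a')*t^6 - 6*c*a'*t^5 - 4*b'*a*(a*t + b)^3" for t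
  define F2 where "F2 t = 56*A*t^6 + 42*(c - A*a')*t^5 - 30*c*a'*t^4 - 12*b'*a^2*(a*t + b)^2" for t
  define F3 where "F3 t = 42*t^4*(8*A*t + 5*(c - A*a')) - 120*c*a'*t^3 - 24*b'*a^3*(a*t + b)" for t
  have dF: "(F has_real_derivative F1 t) (at t)" for t
    unfolding F_def F1_def
    by (rule derivative_eq_intros refl | simp)+ (simp add: algebra_simps eval_nat_numeral)
  have dF1: "(F1 has_real_derivative F2 t) (at t)" for t
    unfolding F1_def F2_def
    by (rule derivative_eq_intros refl | simp)+ (simp add: algebra_simps eval_nat_numeral)
  have dF2: "(F2 has_real_derivative F3 t) (at t)" for t
    unfolding F2_def F3_def
    by (rule derivative_eq_intros refl | simp)+ (simp add: algebra_simps eval_nat_numeral)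
  have deriv_F: "deriv F = F1" and deriv_F1: "deriv F1 = F2"
    using dF dF1 by (simp_all add: fun_eq_iff DERIV_imp_deriv)
  have "a * r > 0" using b r2 by linarith
  then have "r > 0" using a by (simp add: zero_less_mult_iff)
  have F3_nonneg: "F3 t \<ge> 0" if "r \<le> t" for t
  proof -
    have "t > 0" using \<open>r > 0\<close> that by linarith
    have "8*A*t + 5*(c - A*a') \<ge> 0" using r1 that A by (smt (verit) mult_left_mono)
    then have "42*t^4*(8*A*t + 5*(c - A*a')) \<ge> 0" using \<open>t > 0\<close> by simp
    moreover have "c*a'*t^3 < 0"
      using c a' \<open>t > 0\<close> by (simp add: mult_neg_pos)
    moreover have "a*t + b \<ge> 0" using r2 that a by (smt (verit) mult_left_mono)
    then have "b'*a^3*(a*t + b) \<le> 0"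
      using b' a by (simp add: mult_nonpos_nonneg)
    ultimately show ?thesis unfolding F3_def by linarith
  qed
  have F2_pos: "F2 t > 0" if "r \<le> t" for t
    using pos_on_atLeast_if_deriv_nonneg[OF dF2 F3_nonneg _ that] F2r
    by (simp add: deriv_F deriv_F1)
  have F1_pos: "F1 t > 0" if "r \<le> t" for t
    using pos_on_atLeast_if_deriv_nonneg[OF dF1 less_imp_le[OF F2_pos] _ that] F1r
    by (simp add: deriv_F)
  show ?thesis
  proof (rule mono_onI)
    fix x y assume "x \<in> {r..}" "y \<in> {r..}" "x \<le> y"
    show "F x \<le> F y"
      by (rule DERIV_nonneg_imp_nondecreasing[OF \<open>x \<le> y\<close>])
        (use \<open>x \<in> {r..}\<close> dF less_imp_le[OF F1_pos] in force)
  qed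
qed

lemma fpoly_neg_between:
  fixes a b r s :: "nat \<Rightarrow> real"
  assumes apos: "\<And>k. a k > 0" and bneg: "\<And>k. b k < 0"
    and ab: "a (n+1) * a n + b (n+1) > 0"
    and ii: "8 * (a (n+1) * a n + b (n+1)) * r n
               + 5 * (a (n+1) * b n - a (n - 1) * a (n+1) * a n - a (n - 1) * b (n+1)) \<ge> 0"
      "a n * r n + b n \<ge> 0"
    and iii: "deriv (deriv (fpoly a b n)) (r n) > 0" "deriv (fpoly a b n) (r n) > 0"
      "fpoly a b n (s n) < 0"
    and x: "r n \<le> x" "x \<le> s n"
  shows "fpoly a b n x < 0"
proof -
  have "mono_on {r n..} (fpoly a b n)"
    unfolding fpoly_def
  proof (rule sextic_mono_on)
    show "a (n+1) * b n < 0" using apos bneg by (simp add: mult_pos_neg)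
    show "8 * (a (n+1) * a n + b (n+1)) * r n
            + 5 * (a (n+1) * b n - (a (n+1) * a n + b (n+1)) * a (n - 1)) \<ge> 0"
      using ii(1) by (simp add: algebra_simps)
  qed (use apos bneg ab ii(2) iii(1,2) in \<open>simp_all add: fpoly_def[abs_def]\<close>)
  then have "fpoly a b n x \<le> fpoly a b n (s n)"
    using x by (auto intro: mono_onD)
  with iii(3) show ?thesis by linarith
qed

lemma fpoly_at_ratio:
  fixes z a b :: "nat \<Rightarrow> real"
  assumes zpos: "\<And>k. z k > 0"
    and rec: "\<And>k. k \<ge> 1 \<Longrightarrow> z (k+1) = a k * z k + b k * z (k - 1)"
    and "n \<ge> 2"
  shows "fpoly a b n (z n / z (n - 1))
           = b (n - 1) * (z (n+2) * z (n - 2) * z n ^ 6 - z (n+1) ^ 4 * z (n - 1) ^ 4) / z (n - 1) ^ 8"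
proof -
  define p q u v w where "p = z (n - 1)" and "q = z n" and "u = z (n+1)"
    and "v = z (n+2)" and "w = z (n - 2)"
  have "p > 0" using zpos p_def by simp
  have u: "u = a n * q + b n * p" using rec[of n] \<open>n \<ge> 2\<close> u_def q_def p_def by simp
  have v: "v = a (n+1) * u + b (n+1) * q" using rec[of "n+1"] u_def q_def v_def by simp
  have q: "q = a (n - 1) * p + b (n - 1) * w"
    using rec[of "n - 1"] \<open>n \<ge> 2\<close> q_def p_def w_def
    by (simp add: numeral_2_eq_2 Suc_diff_Suc)
  have "(a (n+1) * a n + b (n+1)) * (q/p) + a (n+1) * b n = v/p"
    using \<open>p > 0\<close> by (simp add: v u field_simps)
  moreover have "q/p - a (n - 1) = b (n - 1) * w / p"
    using \<open>p > 0\<close> by (simp add: q field_simps)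
  moreover have "a n * (q/p) + b n = u/p"
    using \<open>p > 0\<close> by (simp add: u field_simps)
  ultimately have "fpoly a b n (q/p) = v/p * (b (n - 1) * w / p) * (q/p)^6 - b (n - 1) * (u/p)^4"
    unfolding fpoly_def by simp
  also have "\<dots> = b (n - 1) * (v * w * q^6 - u^4 * p^4) / p^8"
    using \<open>p > 0\<close> by (simp add: power_divide divide_simps) (simp add: algebra_simps eval_nat_numeral)
  finally show ?thesis unfolding p_def q_def u_def v_def w_def .
qed

lemma ratio_quotients_le_iff:
  fixes p q u v w :: real
  assumes "p > 0" "q > 0" "u > 0" "v > 0" "w > 0"
  shows "((u/q) / (q/p))^2 \<le> (q/p) / (p/w) * ((v/u) / (u/q)) \<longleftrightarrow> u^4 * p^4 \<le> v * w * q^6"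
proof -
  have "(q/p) / (p/w) * ((v/u) / (u/q)) = (v * w * q^2) / (p^2 * u^2)"
    using assms by (simp add: field_simps power2_eq_square)
  moreover have "((u/q) / (q/p))^2 = (u^2 * p^2) / q^4"
    using assms by (simp add: field_simps power2_eq_square eval_nat_numeral)
  ultimately show ?thesis
    using assms by (simp add: divide_simps) (simp add: algebra_simps eval_nat_numeral)
qed

lemma ratio_log_convex_shift:
  fixes z :: "nat \<Rightarrow> real"
  assumes zpos: "\<And>k. z k > 0"
    and ineq: "\<And>n. n \<ge> N + 2 \<Longrightarrow> z (n+1)^4 * z (n - 1)^4 \<le> z (n+2) * z (n - 2) * z n^6"
  shows "ratio_log_convex (\<lambda>m. z (m + N + 1) / z (m + N))"
  unfolding ratio_log_convex_def log_convex_def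
proof (intro conjI allI impI)
  fix m :: nat assume "m \<ge> 1"
  then obtain k where m: "m = Suc k" by (cases m) auto
  have "z (k+N+3)^4 * z (k+N+1)^4 \<le> z (k+N+4) * z (k+N) * z (k+N+2)^6"
    using ineq[of "k+N+2"] by (simp add: eval_nat_numeral)
  then show "((z (m+1 + N + 1) / z (m+1 + N)) / (z (m + N + 1) / z (m + N)))^2
        \<le> (z (m - 1 + 1 + N + 1) / z (m - 1 + 1 + N)) / (z (m - 1 + N + 1) / z (m - 1 + N))
          * ((z (m + 1 + 1 + N + 1) / z (m + 1 + 1 + N)) / (z (m + 1 + N + 1) / z (m + 1 + N)))"
    using ratio_quotients_le_iff[of "z (k+N+1)" "z (k+N+2)" "z (k+N+3)" "z (k+N+4)" "z (k+N)"] zpos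
    by (simp add: m eval_nat_numeral)
qed (use zpos in simp_all)

theorem theorem2p11:
  fixes z a b r s :: "nat \<Rightarrow> real" and N :: nat
  assumes zpos: "\<forall>n. z n > 0"
    and rec: "\<forall>n\<ge>1. z (n+1) = a n * z n + b n * z (n - 1)"
    and apos: "\<forall>n. a n > 0"
    and bneg: "\<forall>n. b n < 0"
    and ab: "\<forall>n\<ge>1. a (n+1) * a n + b (n+1) > 0"
    and Npos: "N \<ge> 1"
    and i: "\<forall>n\<ge>N. r n \<le> z n / z (n - 1) \<and> z n / z (n - 1) \<le> s n \<and> s n \<le> a n"
    and ii: "\<forall>n\<ge>N. 8 * (a (n+1) * a n + b (n+1)) * r n
                 + 5 * (a (n+1) * b n - a (n - 1) * a (n+1) * a n - a (n - 1) * b (n+1)) \<ge> 0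
               \<and> a n * r n + b n \<ge> 0"
    and iii: "\<forall>n\<ge>N. deriv (deriv (fpoly a b n)) (r n) > 0
               \<and> deriv (fpoly a b n) (r n) > 0 \<and> fpoly a b n (s n) < 0"
  shows "ratio_log_convex (\<lambda>n. z (n + N + 1) / z (n + N))"
proof (rule ratio_log_convex_shift)
  fix n assume "n \<ge> N + 2"
  have "fpoly a b n (z n / z (n - 1)) < 0"
    by (rule fpoly_neg_between[where r = r and s = s])
      (use \<open>n \<ge> N + 2\<close> Npos i ii iii apos bneg ab[rule_format, of n] in auto)
  then have "b (n - 1) * (z (n+2) * z (n - 2) * z n ^ 6 - z (n+1) ^ 4 * z (n - 1) ^ 4) < 0"
    using fpoly_at_ratio[of z a b n] zpos rec \<open>n \<ge> N + 2\<close>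
    by (simp add: divide_less_0_iff)
  with bneg[rule_format, of "n - 1"]
  show "z (n+1)^4 * z (n - 1)^4 \<le> z (n+2) * z (n - 2) * z n^6"
    by (simp add: mult_less_0_iff)
qed (use zpos in simp)

end
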